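(* Let $\mathbf L$ be an algebraic lattice with an equa-interior operator $\eta$ satisfying \[ (\dagger)\qquad \tau(x)\le\tau(c)\ \&\ \eta(z)\le c\ \implies\ \eta(\eta(z)\vee\tau(x\wedge z))\le c \quad\text{for all }x,z,c\in L. \] Then $(\mathbf L,\eta)$ satisfies the four-coatom condition: whenever $a,b,c,d$ are coatoms of $\mathbf L$ such that $a\sim d$, $\eta(a)\not\le d$, $\eta(c)\le d$ and $\eta(c)=\eta(a\wedge b)$, then $\eta(c)=\eta(b\wedge d)$.
   Context: An equa-interior operator on an algebraic lattice $\mathbf L$ is a map $\eta:L\to L$ such that for all $x,y,z\in L$: (I1) $\eta(x)\le x$; (I2) $x\ge y$ implies $\eta(x)\ge\eta(y)$; (I3) $\eta^2(x)=\eta(x)$; (I4) $\eta(1)=1$; (I5) if $\eta(x)=u$ for all $x\in X\subseteq L$ then $\eta(\bigvee X)=u$; (I6) $\eta(x)\vee(y\wedge z)=(\eta(x)\vee y)\wedge(\eta(x)\vee z)$; (I7) the image $\eta(L)$ is the complete join subsemilattice of $L$ generated by the elements of $\eta(L)$ that are compact in $\mathbf L$; (I8) there is a compact element $w\in L$ with $\eta(w)=w$ such that the interval $[w,1]$ is isomorphic to the congruence lattice of a join semilattice with $0$. Define $\tau(x)=\bigvee\{z\in L:\eta(z)=\eta(x)\}$. For coatoms $a,d$, $a\sim d$ means the principal filter ${\uparrow}(a\wedge d)$ has exactly four elements, namely $\{1,a,d,a\wedge d\}$. *)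

theory Defs
  imports Main
begin

definition compact_el :: "'a::complete_lattice \<Rightarrow> bool" where
  "compact_el c \<longleftrightarrow> (\<forall>X. c \<le> Sup X \<longrightarrow> (\<exists>F. finite F \<and> F \<subseteq> X \<and> c \<le> Sup F))"

definition algebraic_lattice :: "'a::complete_lattice itself \<Rightarrow> bool" where
  "algebraic_lattice _ \<longleftrightarrow> (\<forall>x::'a. x = Sup {c. compact_el c \<and> c \<le> x})"

definition join_semilattice0 :: "'b set \<Rightarrow> ('b \<Rightarrow> 'b \<Rightarrow> 'b) \<Rightarrow> 'b \<Rightarrow> bool" where
  "join_semilattice0 S j z \<longleftrightarrow>
     z \<in> S \<and> (\<forall>x\<in>S. \<forall>y\<in>S. j x y \<in> S)
     \<and> (\<forall>x\<in>S. \<forall>y\<in>S. \<forall>u\<in>S. j (j x y) u = j x (j y u))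
     \<and> (\<forall>x\<in>S. \<forall>y\<in>S. j x y = j y x)
     \<and> (\<forall>x\<in>S. j x x = x)
     \<and> (\<forall>x\<in>S. j z x = x)"

definition semilattice_congruences :: "'b set \<Rightarrow> ('b \<Rightarrow> 'b \<Rightarrow> 'b) \<Rightarrow> ('b \<times> 'b) set set" where
  "semilattice_congruences S j =
     {\<theta>. equiv S \<theta> \<and>
          (\<forall>x y u v. (x, y) \<in> \<theta> \<longrightarrow> (u, v) \<in> \<theta> \<longrightarrow> (j x u, j y v) \<in> \<theta>)}"

text \<open>The interval [w,1] of L is order-isomorphic (hence lattice-isomorphic) to
  the congruence lattice (ordered by inclusion) of the join semilattice (S,j,z).\<close>
definition interval_iso_Con :: "'a::complete_lattice \<Rightarrow> 'b set \<Rightarrow> ('b \<Rightarrow> 'b \<Rightarrow> 'b) \<Rightarrow> bool" where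
  "interval_iso_Con w S j \<longleftrightarrow>
     (\<exists>f. bij_betw f {x. w \<le> x} (semilattice_congruences S j) \<and>
          (\<forall>x\<in>{x. w \<le> x}. \<forall>y\<in>{x. w \<le> x}. x \<le> y \<longleftrightarrow> f x \<subseteq> f y))"

definition equa_interior :: "('a::complete_lattice \<Rightarrow> 'a) \<Rightarrow> 'b itself \<Rightarrow> bool" where
  "equa_interior \<eta> _ \<longleftrightarrow>
     (\<forall>x. \<eta> x \<le> x) \<and>
     (\<forall>x y. y \<le> x \<longrightarrow> \<eta> y \<le> \<eta> x) \<and>
     (\<forall>x. \<eta> (\<eta> x) = \<eta> x) \<and>
     \<eta> top = top \<and>
     (\<forall>X u. X \<noteq> {} \<longrightarrow> (\<forall>x\<in>X. \<eta> x = u) \<longrightarrow> \<eta> (Sup X) = u) \<and>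
     (\<forall>x y z. sup (\<eta> x) (inf y z) = inf (sup (\<eta> x) y) (sup (\<eta> x) z)) \<and>
     range \<eta> = {Sup Y | Y. Y \<subseteq> {c \<in> range \<eta>. compact_el c}} \<and>
     (\<exists>w. compact_el w \<and> \<eta> w = w \<and>
        (\<exists>(S::'b set) j z. join_semilattice0 S j z \<and> interval_iso_Con w S j))"

definition tau :: "('a::complete_lattice \<Rightarrow> 'a) \<Rightarrow> 'a \<Rightarrow> 'a" where
  "tau \<eta> x = Sup {z. \<eta> z = \<eta> x}"

definition coatom :: "'a::complete_lattice \<Rightarrow> bool" where
  "coatom a \<longleftrightarrow> a < top \<and> (\<forall>x. a \<le> x \<longrightarrow> x = a \<or> x = top)"

definition coatom_sim :: "'a::complete_lattice \<Rightarrow> 'a \<Rightarrow> bool" where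
  "coatom_sim a d \<longleftrightarrow> {x. inf a d \<le> x} = {top, a, d, inf a d} \<and> card {top, a, d, inf a d} = 4"

end

theory Submission
  imports Defs
begin

text \<open>If \<open>\<eta>(b \<and> d)\<close> were not below the coatom \<open>c\<close>, then \<open>\<eta>(b \<and> d) \<or> c = 1\<close>.
  Since \<open>a \<sim> d\<close> and \<open>\<eta>(a) \<not>\<le> d\<close>, the element \<open>\<tau>(a \<and> d)\<close> lies in \<open>{1, a, d, a \<and> d}\<close> but
  is neither \<open>1\<close> nor \<open>a\<close>, so \<open>\<tau>(a \<and> d) \<le> \<tau>(d)\<close>. Applying \<open>(\<dagger>)\<close> with \<open>x = a \<and> d\<close>, \<open>z = b \<and> d\<close>
  and bound \<open>d\<close>: the meet \<open>x \<and> z\<close> is sandwiched between \<open>\<eta>(c)\<close> and \<open>a \<and> b\<close>, so it has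
  interior \<open>\<eta>(c)\<close> and \<open>c \<le> \<tau>(x \<and> z)\<close>; hence \<open>\<eta>(1) \<le> d\<close>, which is absurd.
  Only the axioms (I1)--(I5) of \<open>\<eta>\<close> are used.\<close>

lemma
  assumes "equa_interior \<eta> T"
  shows equa_interior_le: "\<eta> x \<le> x"
    and equa_interior_mono: "y \<le> x \<Longrightarrow> \<eta> y \<le> \<eta> x"
    and equa_interior_idem: "\<eta> (\<eta> x) = \<eta> x"
    and equa_interior_top: "\<eta> top = top"
    and equa_interior_Sup_const: "X \<noteq> {} \<Longrightarrow> \<forall>x\<in>X. \<eta> x = u \<Longrightarrow> \<eta> (Sup X) = u"
proof -
  show "\<eta> x \<le> x" using assms[unfolded equa_interior_def, THEN conjunct1] by blast
  show "y \<le> x \<Longrightarrow> \<eta> y \<le> \<eta> x"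
    using assms[unfolded equa_interior_def, THEN conjunct2, THEN conjunct1] by blast
  show "\<eta> (\<eta> x) = \<eta> x"
    using assms[unfolded equa_interior_def, THEN conjunct2, THEN conjunct2, THEN conjunct1] by blast
  show "\<eta> top = top"
    using assms[unfolded equa_interior_def, THEN conjunct2, THEN conjunct2, THEN conjunct2, THEN conjunct1] .
  show "X \<noteq> {} \<Longrightarrow> \<forall>x\<in>X. \<eta> x = u \<Longrightarrow> \<eta> (Sup X) = u"
    using assms[unfolded equa_interior_def, THEN conjunct2, THEN conjunct2, THEN conjunct2,
        THEN conjunct2, THEN conjunct1] by blast
qed

lemma equa_interior_le_iff:
  assumes "equa_interior \<eta> T" shows "\<eta> y \<le> x \<longleftrightarrow> \<eta> y \<le> \<eta> x"
  by (metis assms equa_interior_idem equa_interior_le equa_interior_mono order_trans)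

lemma equa_interior_eq_if_between:
  assumes "equa_interior \<eta> T" and "\<eta> x \<le> y" and "y \<le> x"
  shows "\<eta> y = \<eta> x"
  using assms by (metis antisym equa_interior_le_iff equa_interior_mono)

lemma tau_upper: "\<eta> y = \<eta> x \<Longrightarrow> y \<le> tau \<eta> x"
  unfolding tau_def by (rule Sup_upper) simp

lemma le_tau: "x \<le> tau \<eta> x"
  by (rule tau_upper) (rule refl)

lemma equa_interior_tau:
  assumes "equa_interior \<eta> T" shows "\<eta> (tau \<eta> x) = \<eta> x"
  unfolding tau_def by (rule equa_interior_Sup_const[OF assms]) auto

lemma coatom_sup_eq_top:
  assumes "coatom c" and "\<not> y \<le> c" shows "sup y c = top"
  using assms unfolding coatom_def by (metis sup.cobounded1 sup_ge2)

lemma coatom_sim_above: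
  assumes "coatom_sim a d" and "inf a d \<le> x" shows "x \<in> {top, a, d, inf a d}"
  using assms unfolding coatom_sim_def by blast

lemma tau_inf_le_tau_if_interior_not_le:
  assumes eq: "equa_interior \<eta> T" and sim: "coatom_sim a d" and "coatom d"
    and not_le: "\<not> \<eta> a \<le> d"
  shows "tau \<eta> (inf a d) \<le> tau \<eta> d"
proof -
  have interior: "\<eta> (tau \<eta> (inf a d)) \<le> inf a d"
    using equa_interior_tau[OF eq] equa_interior_le[OF eq] by metis
  have "tau \<eta> (inf a d) \<noteq> top"
    using interior equa_interior_top[OF eq] \<open>coatom d\<close> unfolding coatom_def
    by (metis inf.boundedE top.extremum_unique less_le)
  moreover have "tau \<eta> (inf a d) \<noteq> a"
    using interior not_le by (metis inf.boundedE)
  ultimately have "tau \<eta> (inf a d) \<le> d"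
    using coatom_sim_above[OF sim le_tau[of "inf a d" \<eta>]] by auto
  then show ?thesis using le_tau order_trans by blast
qed

lemma interior_inf_le_coatom:
  assumes eq: "equa_interior \<eta> T"
    and dagger: "\<And>x z c. tau \<eta> x \<le> tau \<eta> c \<Longrightarrow> \<eta> z \<le> c \<Longrightarrow>
                   \<eta> (sup (\<eta> z) (tau \<eta> (inf x z))) \<le> c"
    and "coatom c" and "coatom d" and sim: "coatom_sim a d"
    and not_le: "\<not> \<eta> a \<le> d" and c_le: "\<eta> c \<le> d" and c_eq: "\<eta> c = \<eta> (inf a b)"
  shows "\<eta> (inf b d) \<le> c"
proof (rule ccontr)
  assume "\<not> \<eta> (inf b d) \<le> c"
  then have join_top: "sup (\<eta> (inf b d)) c = top"
    using coatom_sup_eq_top[OF \<open>coatom c\<close>] by blast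
  let ?y = "inf (inf a d) (inf b d)"
  have "\<eta> c \<le> ?y"
    using c_le c_eq equa_interior_le[OF eq, of "inf a b"] by (simp add: le_inf_iff)
  moreover have "?y \<le> inf a b" by (auto intro: le_infI1 le_infI2)
  ultimately have "\<eta> c = \<eta> ?y"
    using equa_interior_eq_if_between[OF eq] c_eq by metis
  then have "c \<le> tau \<eta> ?y" by (rule tau_upper)
  then have "sup (\<eta> (inf b d)) (tau \<eta> ?y) = top"
    using join_top by (metis sup_mono order_refl top_unique)
  moreover have "\<eta> (sup (\<eta> (inf b d)) (tau \<eta> ?y)) \<le> d"
    using dagger tau_inf_le_tau_if_interior_not_le[OF eq sim \<open>coatom d\<close> not_le]
      equa_interior_le[OF eq] by (meson inf.boundedE)
  ultimately show False
    using equa_interior_top[OF eq] \<open>coatom d\<close> unfolding coatom_def by (simp add: top_unique)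
qed

theorem theorem6p3:
  fixes \<eta> :: "'a::complete_lattice \<Rightarrow> 'a"
  assumes alg: "algebraic_lattice TYPE('a)"
    and eq: "equa_interior \<eta> TYPE('b)"
    and dagger: "\<And>x z c. tau \<eta> x \<le> tau \<eta> c \<Longrightarrow> \<eta> z \<le> c \<Longrightarrow>
                   \<eta> (sup (\<eta> z) (tau \<eta> (inf x z))) \<le> c"
  shows "\<forall>a b c d. coatom a \<and> coatom b \<and> coatom c \<and> coatom d \<and> coatom_sim a d \<and>
           \<not> (\<eta> a \<le> d) \<and> \<eta> c \<le> d \<and> \<eta> c = \<eta> (inf a b)
           \<longrightarrow> \<eta> c = \<eta> (inf b d)"
proof (intro allI impI)
  fix a b c d
  assume H: "coatom a \<and> coatom b \<and> coatom c \<and> coatom d \<and> coatom_sim a d \<and>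
           \<not> (\<eta> a \<le> d) \<and> \<eta> c \<le> d \<and> \<eta> c = \<eta> (inf a b)"
  then have "\<eta> (inf b d) \<le> c"
    using interior_inf_le_coatom[OF eq dagger] by blast
  moreover have "\<eta> c \<le> inf b d"
    using H equa_interior_le[OF eq, of "inf a b"] by (metis le_inf_iff)
  ultimately show "\<eta> c = \<eta> (inf b d)"
    using equa_interior_le_iff[OF eq] by (metis antisym)
qed

end
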